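(* Let $n\ge 1$ and let $y\in\mathbb{R}^n$ satisfy $y_1\ge y_2\ge\cdots\ge y_n\ge 0$ and $y_1>0$. Define $f:(0,+\infty)\to\mathbb{R}$ by $$f(\lambda)=\sum_{i=1}^n \max\left\{1,\left(y_i/\sqrt{\lambda}\right)^2\right\}.$$ The function $f$ is continuous and strictly decreasing on $(0,y_1^2]$, with $f(\lambda)\to+\infty$ as $\lambda\to 0^+$ and $f(y_1^2)=n$. Let $C\ge\sqrt{n}$, let $\lambda(C)$ be the unique $\lambda\in(0,y_1^2]$ with $f(\lambda)=C^2$, and let $k(C)$ be the maximum index $k$ such that $y_k>\sqrt{\lambda(C)}$. Then $$\min_{q\in\mathcal{Q}}\ \max_{\sigma\in\mathbb{R}^n,\ \|\sigma\|_2\le 1}\ \sum_{i=1}^n\left(\sigma_i\frac{y_i}{q_i}\right)^2=\lambda(C),\qquad \mathcal{Q}=\{q\in\mathbb{R}^n:\ q_i\ge 1\ \forall i,\ \|q\|_2\le C\},$$ and the minimum over $q$ is attained by $$q_k=\begin{cases} y_k/\sqrt{\lambda(C)} & \text{if } k\le k(C),\\ 1 & \text{otherwise.}\end{cases}$$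
   Context: Here $\|\cdot\|_2$ is the Euclidean norm. In the paper, $y$ is a vector of nonnegative node "centralities" (e.g. column norms of a matrix $(I-\Lambda)^{-1}D$, or the vector $n^{-1}((I-\Lambda)^{-1}D)'\mathbf{1}$), $q$ is a protection vector and $\sigma$ a vector of shock standard deviations. *)

theory Defs
  imports "HOL-Analysis.Analysis"
begin

text \<open>Vectors in R^n are represented as functions nat => real, indexed by 1..n;
  values outside {1..n} are irrelevant (ignored).\<close>

definition enorm2 :: "nat \<Rightarrow> (nat \<Rightarrow> real) \<Rightarrow> real" where
  "enorm2 n v = sqrt (\<Sum>i=1..n. (v i)\<^sup>2)"

definition fcent :: "nat \<Rightarrow> (nat \<Rightarrow> real) \<Rightarrow> real \<Rightarrow> real" where
  "fcent n y lam = (\<Sum>i=1..n. max 1 ((y i / sqrt lam)\<^sup>2))"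

definition protset :: "nat \<Rightarrow> real \<Rightarrow> (nat \<Rightarrow> real) set" where
  "protset n C = {q. (\<forall>i\<in>{1..n}. q i \<ge> 1) \<and> enorm2 n q \<le> C}"

definition objvals :: "nat \<Rightarrow> (nat \<Rightarrow> real) \<Rightarrow> (nat \<Rightarrow> real) \<Rightarrow> real set" where
  "objvals n y q = {(\<Sum>i=1..n. (\<sigma> i * (y i / q i))\<^sup>2) | \<sigma>. enorm2 n \<sigma> \<le> 1}"

end

theory Submission
  imports Defs
begin

text \<open>For fixed \<open>q\<close>, the quantity maximised over the unit ball is a sum
  \<open>\<Sum>\<^sub>i \<sigma>\<^sub>i\<^sup>2 a\<^sub>i\<close> with weights \<open>a\<^sub>i = (y\<^sub>i/q\<^sub>i)\<^sup>2 \<ge> 0\<close>, whose maximum is the largest weight,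
  attained at a unit coordinate vector. If some admissible \<open>q\<close> had all weights below
  \<open>\<lambda> = \<lambda>(C)\<close>, then \<open>q\<^sub>i\<^sup>2 \<ge> max 1 (y\<^sub>i\<^sup>2/\<lambda>)\<close> for every \<open>i\<close>, strictly for \<open>i = 1\<close>, so
  \<open>\<parallel>q\<parallel>\<^sup>2 > f(\<lambda>) = C\<^sup>2\<close>. Conversely \<open>q\<^sub>i = max 1 (y\<^sub>i/\<surd>\<lambda>)\<close>, which is the claimed
  minimiser, has \<open>\<parallel>q\<parallel>\<^sup>2 = f(\<lambda>) = C\<^sup>2\<close> and weights \<open>min y\<^sub>i\<^sup>2 \<lambda> \<le> \<lambda>\<close>, with equality at \<open>i = 1\<close>.\<close>

lemma fcent_eq:
  assumes "lam > 0"
  shows "fcent n y lam = (\<Sum>i=1..n. max 1 ((y i)\<^sup>2 / lam))"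
  using assms by (simp add: fcent_def power_divide)

lemma continuous_on_fcent: "continuous_on {0<..} (fcent n y)"
proof -
  have "continuous_on {0<..} (\<lambda>lam. \<Sum>i=1..n. max 1 ((y i)\<^sup>2 / lam))"
    by (intro continuous_intros) auto
  then show ?thesis
    by (rule continuous_on_cong[THEN iffD1, rotated 2]) (auto simp: fcent_eq)
qed

lemma fcent_strict_antimono:
  assumes "j \<in> {1..n}" and "0 < a" and "a < b" and "b \<le> (y j)\<^sup>2"
  shows "fcent n y b < fcent n y a"
proof -
  have "max 1 ((y i)\<^sup>2 / b) \<le> max 1 ((y i)\<^sup>2 / a)" for i
    using assms by (intro max.mono divide_left_mono) auto
  moreover have "max 1 ((y j)\<^sup>2 / b) < max 1 ((y j)\<^sup>2 / a)"
  proof -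
    have "(y j)\<^sup>2 / b < (y j)\<^sup>2 / a"
      using assms(2-4) by (intro divide_strict_left_mono) auto
    moreover have "1 \<le> (y j)\<^sup>2 / b" using assms(2-4) by simp
    ultimately show ?thesis by (auto simp: max_def)
  qed
  ultimately have "(\<Sum>i=1..n. max 1 ((y i)\<^sup>2 / b)) < (\<Sum>i=1..n. max 1 ((y i)\<^sup>2 / a))"
    using assms(1) by (intro sum_strict_mono_ex1) auto
  with assms show ?thesis by (simp add: fcent_eq)
qed

lemma fcent_tendsto_at_top:
  assumes "j \<in> {1..n}" and "y j \<noteq> 0"
  shows "filterlim (fcent n y) at_top (at_right 0)"
proof (rule filterlim_at_top_mono)
  show "filterlim (\<lambda>x. (y j)\<^sup>2 * inverse x) at_top (at_right 0)"
    using assms(2)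
    by (intro filterlim_tendsto_pos_mult_at_top[OF tendsto_const _ filterlim_inverse_at_top_right])
      simp
  have "(y j)\<^sup>2 * inverse x \<le> fcent n y x" if "x > 0" for x
  proof -
    have "(y j)\<^sup>2 * inverse x \<le> max 1 ((y j)\<^sup>2 / x)" by (simp add: field_simps)
    also have "\<dots> \<le> (\<Sum>i=1..n. max 1 ((y i)\<^sup>2 / x))"
      using assms(1) by (intro member_le_sum) auto
    finally show ?thesis using that by (simp add: fcent_eq)
  qed
  then show "\<forall>\<^sub>F x in at_right 0. (y j)\<^sup>2 * inverse x \<le> fcent n y x"
    by (simp add: eventually_at_right_field exI[of _ 1])
qed

lemma fcent_eq_card:
  assumes "lam > 0" and "\<forall>i\<in>{1..n}. (y i)\<^sup>2 \<le> lam"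
  shows "fcent n y lam = real n"
  using assms by (simp add: fcent_eq)

lemma ex1_fcent_eq:
  assumes "j \<in> {1..n}" and "y j \<noteq> 0" and "\<forall>i\<in>{1..n}. (y i)\<^sup>2 \<le> (y j)\<^sup>2"
    and "real n \<le> c"
  shows "\<exists>!lam. lam \<in> {0<..(y j)\<^sup>2} \<and> fcent n y lam = c"
proof (rule ex_ex1I)
  have "\<forall>\<^sub>F x in at_right 0. c \<le> fcent n y x"
    using fcent_tendsto_at_top[of j n y] assms(1,2) by (simp add: filterlim_at_top)
  moreover have "\<forall>\<^sub>F x in at_right 0. x < (y j)\<^sup>2"
    using assms(2) by (auto simp: eventually_at_right_field intro!: exI[of _ "(y j)\<^sup>2"])
  ultimately have "\<forall>\<^sub>F x in at_right 0. c \<le> fcent n y x \<and> x < (y j)\<^sup>2 \<and> 0 < x"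
    by (simp add: eventually_conj_iff eventually_at_right_less)
  then obtain a where a: "c \<le> fcent n y a" "a < (y j)\<^sup>2" "0 < a"
    using eventually_happens'[OF trivial_limit_at_right_real] by blast
  have "continuous_on {a..(y j)\<^sup>2} (fcent n y)"
    using a by (intro continuous_on_subset[OF continuous_on_fcent]) auto
  moreover have "fcent n y ((y j)\<^sup>2) = real n"
    using assms by (intro fcent_eq_card) auto
  ultimately obtain x where "a \<le> x" "x \<le> (y j)\<^sup>2" "fcent n y x = c"
    using IVT2'[of "fcent n y" "(y j)\<^sup>2" c a] assms(4) a by auto
  with a show "\<exists>lam. lam \<in> {0<..(y j)\<^sup>2} \<and> fcent n y lam = c"
    by (intro exI[of _ x]) auto
next
  fix l1 l2
  assume "l1 \<in> {0<..(y j)\<^sup>2} \<and> fcent n y l1 = c" "l2 \<in> {0<..(y j)\<^sup>2} \<and> fcent n y l2 = c"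
  with fcent_strict_antimono[OF assms(1)] show "l1 = l2"
    by (metis greaterThanAtMost_iff less_irrefl linorder_neqE_linordered_idom)
qed

lemma Max_mem_objvals:
  assumes "n \<ge> 1"
  shows "(MAX i\<in>{1..n}. (y i / q i)\<^sup>2) \<in> objvals n y q"
proof -
  have "(MAX i\<in>{1..n}. (y i / q i)\<^sup>2) \<in> (\<lambda>i. (y i / q i)\<^sup>2) ` {1..n}"
    using assms by (intro Max_in) auto
  then obtain j where j: "j \<in> {1..n}" "(y j / q j)\<^sup>2 = (MAX i\<in>{1..n}. (y i / q i)\<^sup>2)"
    by auto
  define \<sigma> :: "nat \<Rightarrow> real" where "\<sigma> i = (if i = j then 1 else 0)" for i
  have "(\<Sum>i=1..n. (\<sigma> i)\<^sup>2) = (\<Sum>i=1..n. if i = j then 1 else 0)"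
    by (intro sum.cong) (auto simp: \<sigma>_def)
  then have unit: "(\<Sum>i=1..n. (\<sigma> i)\<^sup>2) = 1"
    using j(1) by simp
  have "(\<Sum>i=1..n. (\<sigma> i * (y i / q i))\<^sup>2) = (\<Sum>i=1..n. if i = j then (y j / q j)\<^sup>2 else 0)"
    by (intro sum.cong) (auto simp: \<sigma>_def)
  then have "(\<Sum>i=1..n. (\<sigma> i * (y i / q i))\<^sup>2) = (y j / q j)\<^sup>2"
    using j(1) by simp
  with unit show ?thesis
    unfolding objvals_def enorm2_def using j(2) by (intro CollectI exI[of _ \<sigma>]) auto
qed

lemma objvals_le_Max:
  assumes "n \<ge> 1" and "v \<in> objvals n y q"
  shows "v \<le> (MAX i\<in>{1..n}. (y i / q i)\<^sup>2)"
proof -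
  let ?M = "MAX i\<in>{1..n}. (y i / q i)\<^sup>2"
  obtain \<sigma> where v: "v = (\<Sum>i=1..n. (\<sigma> i * (y i / q i))\<^sup>2)"
    and \<sigma>: "(\<Sum>i=1..n. (\<sigma> i)\<^sup>2) \<le> 1"
    using assms(2) unfolding objvals_def enorm2_def by auto
  have M: "(y i / q i)\<^sup>2 \<le> ?M" if "i \<in> {1..n}" for i
    using that by auto
  have "0 \<le> ?M"
    using M[of 1] assms(1) by (meson atLeastAtMost_iff order.refl order_trans zero_le_power2)
  have "v = (\<Sum>i=1..n. (\<sigma> i)\<^sup>2 * (y i / q i)\<^sup>2)"
    unfolding v power_mult_distrib ..
  also have "\<dots> \<le> (\<Sum>i=1..n. (\<sigma> i)\<^sup>2 * ?M)"
    by (intro sum_mono mult_left_mono M) auto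
  also have "\<dots> = (\<Sum>i=1..n. (\<sigma> i)\<^sup>2) * ?M"
    by (simp add: sum_distrib_right)
  also have "\<dots> \<le> ?M"
    using \<open>0 \<le> ?M\<close> \<sigma> by (intro mult_left_le_one_le sum_nonneg) auto
  finally show ?thesis .
qed

lemma Sup_objvals:
  assumes "n \<ge> 1"
  shows "Sup (objvals n y q) = (MAX i\<in>{1..n}. (y i / q i)\<^sup>2)"
  using Max_mem_objvals[OF assms] objvals_le_Max[OF assms] by (rule cSup_eq_maximum)

lemma level_le_Max_ratio:
  assumes "lam > 0" and "j \<in> {1..n}" and "lam \<le> (y j)\<^sup>2"
    and "\<forall>i\<in>{1..n}. q i \<ge> 1" and "(\<Sum>i=1..n. (q i)\<^sup>2) \<le> fcent n y lam"
  shows "lam \<le> (MAX i\<in>{1..n}. (y i / q i)\<^sup>2)"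
proof (rule ccontr)
  assume "\<not> ?thesis"
  moreover have "(y i / q i)\<^sup>2 \<le> (MAX i\<in>{1..n}. (y i / q i)\<^sup>2)" if "i \<in> {1..n}" for i
    using that by (intro Max_ge) auto
  ultimately have lt: "(y i / q i)\<^sup>2 < lam" if "i \<in> {1..n}" for i
    using that by (meson not_le le_less_trans)
  then have small: "(y i)\<^sup>2 / lam < (q i)\<^sup>2" if "i \<in> {1..n}" for i
  proof -
    have "0 < (q i)\<^sup>2" using assms(4) that by force
    then have "(y i)\<^sup>2 < lam * (q i)\<^sup>2"
      using lt[OF that] by (simp add: power_divide pos_divide_less_eq)
    with assms(1) show ?thesis by (simp add: pos_divide_less_eq mult.commute)
  qed
  have "max 1 ((y i)\<^sup>2 / lam) \<le> (q i)\<^sup>2" if "i \<in> {1..n}" for i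
    using small[OF that] assms(4) that by (auto intro: one_le_power)
  moreover have "max 1 ((y j)\<^sup>2 / lam) < (q j)\<^sup>2"
    using small[OF assms(2)] assms(1,3) by simp
  ultimately have "(\<Sum>i=1..n. max 1 ((y i)\<^sup>2 / lam)) < (\<Sum>i=1..n. (q i)\<^sup>2)"
    using assms(2) by (intro sum_strict_mono_ex1) auto
  with assms(1,5) show False by (simp add: fcent_eq)
qed

lemma level_le_Sup_objvals:
  assumes "n \<ge> 1" and "lam > 0" and "j \<in> {1..n}" and "lam \<le> (y j)\<^sup>2"
    and "fcent n y lam = C\<^sup>2" and "q \<in> protset n C"
  shows "lam \<le> Sup (objvals n y q)"
proof -
  have "(\<Sum>i=1..n. (q i)\<^sup>2) \<le> C\<^sup>2"
    using assms(6) by (intro sqrt_le_D) (simp add: protset_def enorm2_def)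
  moreover have "\<forall>i\<in>{1..n}. 1 \<le> q i" using assms(6) by (simp add: protset_def)
  ultimately show ?thesis
    using level_le_Max_ratio[of lam j n y q] assms(2-5) by (simp add: Sup_objvals[OF assms(1)])
qed

lemma max_one_power2:
  fixes t :: real
  assumes "t \<ge> 0"
  shows "(max 1 t)\<^sup>2 = max 1 (t\<^sup>2)"
proof (cases "t \<le> 1")
  case True
  with assms have "t\<^sup>2 \<le> 1" by (simp add: power_le_one)
  with True show ?thesis by simp
next
  case False
  then have "1 \<le> t\<^sup>2" by (simp add: one_le_power)
  with False show ?thesis by simp
qed

lemma water_filling_mem_protset:
  assumes "lam > 0" and "\<forall>i\<in>{1..n}. y i \<ge> 0" and "fcent n y lam = C\<^sup>2" and "C \<ge> 0"
    and "\<forall>i\<in>{1..n}. q i = max 1 (y i / sqrt lam)"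
  shows "q \<in> protset n C"
proof -
  have "(\<Sum>i=1..n. (q i)\<^sup>2) = C\<^sup>2"
    unfolding assms(3)[symmetric] fcent_def using assms
    by (intro sum.cong) (simp_all add: max_one_power2)
  with assms(4,5) show ?thesis by (simp add: protset_def enorm2_def)
qed

lemma water_filling_Max_ratio:
  fixes n :: nat
  assumes "lam > 0" and "\<forall>i\<in>{1..n}. y i \<ge> 0" and "j \<in> {1..n}" and "lam \<le> (y j)\<^sup>2"
    and "\<forall>i\<in>{1..n}. q i = max 1 (y i / sqrt lam)"
  shows "(MAX i\<in>{1..n}. (y i / q i)\<^sup>2) = lam"
proof -
  have ratio: "(y i / q i)\<^sup>2 = min ((y i)\<^sup>2) lam" if i: "i \<in> {1..n}" for i
  proof (cases "y i \<le> sqrt lam")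
    case True
    then have "q i = 1" using assms(1,5) i by simp
    moreover have "(y i)\<^sup>2 \<le> lam"
      using power_mono[OF True, of 2] assms(1,2) i by simp
    ultimately show ?thesis by simp
  next
    case False
    then have "q i = y i / sqrt lam" using assms(1,5) i by simp
    moreover have "y i \<noteq> 0" using False assms(1) by auto
    moreover have "lam < (y i)\<^sup>2"
      using power_strict_mono[of "sqrt lam" "y i" 2] False assms(1) by simp
    ultimately show ?thesis using assms(1) by simp
  qed
  show ?thesis
  proof (rule Max_eqI)
    fix v assume "v \<in> (\<lambda>i. (y i / q i)\<^sup>2) ` {1..n}"
    then show "v \<le> lam" using ratio by auto
  next
    show "lam \<in> (\<lambda>i. (y i / q i)\<^sup>2) ` {1..n}"
      using ratio[OF assms(3)] assms(3,4) by (intro image_eqI[of _ _ j]) auto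
  qed simp
qed

lemma le_Max_index_above_iff:
  fixes y :: "nat \<Rightarrow> 'a::linorder"
  assumes "\<And>i j. 1 \<le> i \<Longrightarrow> i \<le> j \<Longrightarrow> j \<le> n \<Longrightarrow> y j \<le> y i" and i: "i \<in> {1..n}"
  shows "i \<le> Max ({k \<in> {1..n}. y k > t} \<union> {0}) \<longleftrightarrow> y i > t"
proof
  let ?k = "Max ({k \<in> {1..n}. y k > t} \<union> {0})"
  assume "i \<le> ?k"
  moreover have "?k \<in> {k \<in> {1..n}. y k > t} \<union> {0}" by (intro Max_in) auto
  ultimately show "y i > t"
    using i assms(1)[of i ?k] by auto
next
  assume "y i > t"
  with i show "i \<le> Max ({k \<in> {1..n}. y k > t} \<union> {0})" by (intro Max_ge) auto
qed

theorem theorem1: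
  fixes n :: nat and y :: "nat \<Rightarrow> real" and C :: real
  assumes "n \<ge> 1"
    and "\<And>i j. 1 \<le> i \<Longrightarrow> i \<le> j \<Longrightarrow> j \<le> n \<Longrightarrow> y j \<le> y i"
    and "y n \<ge> 0" and "y 1 > 0"
    and "C \<ge> sqrt (real n)"
  shows "continuous_on {0<..(y 1)\<^sup>2} (fcent n y)
     \<and> (\<forall>a b. 0 < a \<and> a < b \<and> b \<le> (y 1)\<^sup>2 \<longrightarrow> fcent n y b < fcent n y a)
     \<and> filterlim (fcent n y) at_top (at_right 0)
     \<and> fcent n y ((y 1)\<^sup>2) = real n
     \<and> (\<exists>!lam. lam \<in> {0<..(y 1)\<^sup>2} \<and> fcent n y lam = C\<^sup>2)
     \<and> (let lam = (THE lam. lam \<in> {0<..(y 1)\<^sup>2} \<and> fcent n y lam = C\<^sup>2);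
            kC = Max ({k \<in> {1..n}. y k > sqrt lam} \<union> {0});
            qopt = (\<lambda>k. if k \<le> kC then y k / sqrt lam else 1)
        in (\<forall>q \<in> protset n C. Sup (objvals n y q) \<in> objvals n y q
                \<and> (\<forall>v \<in> objvals n y q. v \<le> Sup (objvals n y q)))
           \<and> (\<forall>q \<in> protset n C. lam \<le> Sup (objvals n y q))
           \<and> qopt \<in> protset n C
           \<and> Sup (objvals n y qopt) = lam)"
proof -
  have one: "1 \<in> {1..n}" using assms(1) by simp
  have y_nonneg: "\<forall>i\<in>{1..n}. y i \<ge> 0" using assms(2)[of _ n] assms(3) by fastforce
  have y_le: "\<forall>i\<in>{1..n}. (y i)\<^sup>2 \<le> (y 1)\<^sup>2"
    using assms(2) y_nonneg by (auto intro: power_mono)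
  have C: "C \<ge> 0" "real n \<le> C\<^sup>2"
    using order_trans[OF real_sqrt_ge_zero assms(5)] assms(5) real_sqrt_le_iff[of n "C\<^sup>2"]
    by auto
  have ex1: "\<exists>!lam. lam \<in> {0<..(y 1)\<^sup>2} \<and> fcent n y lam = C\<^sup>2"
    using ex1_fcent_eq[OF one] assms(4) y_le C(2) by simp
  define L where "L = (THE lam. lam \<in> {0<..(y 1)\<^sup>2} \<and> fcent n y lam = C\<^sup>2)"
  have L: "0 < L" "L \<le> (y 1)\<^sup>2" "fcent n y L = C\<^sup>2"
    using theI'[OF ex1] unfolding L_def by auto
  define qopt where
    "qopt = (\<lambda>k. if k \<le> Max ({k \<in> {1..n}. y k > sqrt L} \<union> {0}) then y k / sqrt L else 1)"
  have qopt: "\<forall>i\<in>{1..n}. qopt i = max 1 (y i / sqrt L)"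
    using le_Max_index_above_iff[OF assms(2)] L(1) by (auto simp: qopt_def max_def)
  have "continuous_on {0<..(y 1)\<^sup>2} (fcent n y)"
    by (rule continuous_on_subset[OF continuous_on_fcent]) auto
  moreover have "\<forall>a b. 0 < a \<and> a < b \<and> b \<le> (y 1)\<^sup>2 \<longrightarrow> fcent n y b < fcent n y a"
    using fcent_strict_antimono[OF one] by blast
  moreover have "filterlim (fcent n y) at_top (at_right 0)"
    using fcent_tendsto_at_top[OF one] assms(4) by simp
  moreover have "fcent n y ((y 1)\<^sup>2) = real n"
    using fcent_eq_card y_le assms(4) by simp
  moreover have "\<forall>q \<in> protset n C. Sup (objvals n y q) \<in> objvals n y q
                \<and> (\<forall>v \<in> objvals n y q. v \<le> Sup (objvals n y q))"
    using Max_mem_objvals[OF assms(1)] objvals_le_Max[OF assms(1)]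
    by (simp add: Sup_objvals[OF assms(1)])
  moreover have "\<forall>q \<in> protset n C. L \<le> Sup (objvals n y q)"
    using level_le_Sup_objvals[OF assms(1) L(1) one L(2,3)] by blast
  moreover have "qopt \<in> protset n C"
    using water_filling_mem_protset[OF L(1) y_nonneg L(3) C(1) qopt] .
  moreover have "Sup (objvals n y qopt) = L"
    using water_filling_Max_ratio[OF L(1) y_nonneg one L(2) qopt] by (simp add: Sup_objvals[OF assms(1)])
  ultimately show ?thesis
    using ex1 unfolding Let_def L_def[symmetric] qopt_def[symmetric] by blast
qed

end
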